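(* Let $n = 6k+r$ with integers $k\ge 0$ and $r\in\{0,1,2,3,4,5\}$. There is no balanced permutation sequence of length $n$ in each of the following cases: $r=0$ and $k\ge 2$; $r=1$ and $k\ge 11$; $r=2$ and $k\ge 3$; $r=3$ and $k\ge 8$; $r=4$ and $k\ge 4$; $r=5$ and $k\ge 9$.
   Context: Let $n$ be a positive integer, $N$ a set of $n$ players and $[n]=\{1,\ldots,n\}$ a set of $n$ items. A permutation sequence of length $n$ is an ordered tuple $(\pi_1,\ldots,\pi_n)$ of bijections $\pi_t : N\to[n]$; on day $t$ player $i$ receives item $\pi_t(i)$. For $t\in[n]$ and $i\in N$, $Z_i^t$ is the multiset $\{\pi_1(i),\ldots,\pi_t(i)\}$, and for $j\in[t]$, $Z_i^t[j]$ is the $j$-th smallest element of $Z_i^t$ (counted with multiplicity). The sequence is called balanced if for every $t\in[n]$, every $i\in N$ and every $j\in[t]$: $Z_i^t[j]\le \lceil jn/t\rceil$. *)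

theory Defs
  imports Complex_Main "HOL-Library.Multiset"
begin

definition perm_seq :: "'a set \<Rightarrow> nat \<Rightarrow> (nat \<Rightarrow> 'a \<Rightarrow> nat) \<Rightarrow> bool" where
  "perm_seq N n \<pi> \<longleftrightarrow> (\<forall>t\<in>{1..n}. bij_betw (\<pi> t) N {1..n})"

definition Z :: "(nat \<Rightarrow> 'a \<Rightarrow> nat) \<Rightarrow> nat \<Rightarrow> 'a \<Rightarrow> nat multiset" where
  "Z \<pi> t i = mset (map (\<lambda>s. \<pi> s i) [1..<t+1])"

definition Zth :: "(nat \<Rightarrow> 'a \<Rightarrow> nat) \<Rightarrow> nat \<Rightarrow> 'a \<Rightarrow> nat \<Rightarrow> nat" where
  "Zth \<pi> t i j = sorted_list_of_multiset (Z \<pi> t i) ! (j - 1)"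

definition balanced :: "'a set \<Rightarrow> nat \<Rightarrow> (nat \<Rightarrow> 'a \<Rightarrow> nat) \<Rightarrow> bool" where
  "balanced N n \<pi> \<longleftrightarrow> perm_seq N n \<pi> \<and>
     (\<forall>t\<in>{1..n}. \<forall>i\<in>N. \<forall>j\<in>{1..t}.
        int (Zth \<pi> t i j) \<le> ceiling (real (j * n) / real t))"

end

theory Submission
  imports Defs
begin

text \<open>Only the first four days matter. Write \<open>b\<^sub>1 = \<lceil>n/4\<rceil>\<close>, \<open>b\<^sub>2 = \<lceil>n/3\<rceil>\<close>,
\<open>b\<^sub>3 = \<lceil>n/2\<rceil>\<close>. Balance forces, for every player, one of the first two items to be at most
\<open>b\<^sub>3\<close>, one of the first three to be at most \<open>b\<^sub>2\<close>, one of the first four to be at most \<open>b\<^sub>1\<close>,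
and two of the first four to be at most \<open>b\<^sub>3\<close>. Charge an item \<open>a\<close> received on day 1 or 2 the
weight \<open>[a > b\<^sub>2] + [a > b\<^sub>3]\<close>, on day 3 the weight \<open>[a > b\<^sub>1] + [a > b\<^sub>3]\<close> and on day 4 the
weight \<open>[a > b\<^sub>3]\<close>. A case analysis shows that each player collects weight at most 4, while,
every day being a permutation of the items, the total weight is
\<open>(n - b\<^sub>1) + 2(n - b\<^sub>2) + 4(n - b\<^sub>3)\<close>. Hence \<open>b\<^sub>1 + 2b\<^sub>2 + 4b\<^sub>3 \<ge> 3n\<close>, which is false for
all \<open>n \<ge> 50\<close> and for the even \<open>n\<close> listed in the theorem.\<close>

lemma less_size_filter_mset_if_nth_sorted_list_of_multiset_le:
  fixes M :: "'a::linorder multiset"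
  assumes "j < size M" and "sorted_list_of_multiset M ! j \<le> b"
  shows "j < size {#x \<in># M. x \<le> b#}"
proof -
  define xs where "xs = sorted_list_of_multiset M"
  have xs: "sorted xs" "mset xs = M" "j < length xs"
    using assms(1) by (simp_all add: xs_def flip: size_mset)
  have "\<forall>x\<in>set (take (Suc j) xs). x \<le> b"
  proof
    fix x assume "x \<in> set (take (Suc j) xs)"
    then obtain m where "m \<le> j" "x = xs ! m"
      using xs(3) by (fastforce simp: in_set_conv_nth less_Suc_eq_le)
    then show "x \<le> b"
      using sorted_nth_mono[OF xs(1), of m j] xs(3) assms(2) by (simp add: xs_def)
  qed
  then have "Suc j = length (filter (\<lambda>x. x \<le> b) (take (Suc j) xs))"
    using xs(3) by simp
  also have "\<dots> \<le> length (filter (\<lambda>x. x \<le> b) xs)"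
    by (metis append_take_drop_id filter_append le_add1 length_append)
  also have "\<dots> = size {#x \<in># M. x \<le> b#}"
    by (metis xs(2) mset_filter size_mset)
  finally show ?thesis by simp
qed

lemma le_ceiling_divide_of_nat_iff:
  assumes "0 < t"
  shows "int x \<le> \<lceil>real m / real t\<rceil> \<longleftrightarrow> x \<le> (m + t - 1) div t"
proof -
  have "int x \<le> \<lceil>real m / real t\<rceil> \<longleftrightarrow> (real x - 1) * real t < real m"
    using assms by (simp add: le_ceiling_iff pos_less_divide_eq)
  also have "\<dots> \<longleftrightarrow> x * t < m + t"
    by (simp add: algebra_simps flip: of_nat_mult of_nat_add)
  also have "\<dots> \<longleftrightarrow> x * t \<le> m + t - 1"
    using assms by linarith
  also have "\<dots> \<longleftrightarrow> x \<le> (m + t - 1) div t"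
    using assms by (simp add: less_eq_div_iff_mult_less_eq)
  finally show ?thesis .
qed

lemma balanced_imp_small_items:
  assumes "balanced N n \<pi>" and "t \<in> {1..n}" "i \<in> N" "j \<in> {1..t}"
  shows "j \<le> length (filter (\<lambda>x. x \<le> (j * n + t - 1) div t) (map (\<lambda>s. \<pi> s i) [1..<t+1]))"
proof -
  have "int (Zth \<pi> t i j) \<le> \<lceil>real (j * n) / real t\<rceil>"
    using assms unfolding balanced_def by blast
  then have "sorted_list_of_multiset (Z \<pi> t i) ! (j - 1) \<le> (j * n + t - 1) div t"
    using le_ceiling_divide_of_nat_iff[of t "Zth \<pi> t i j" "j * n"] assms(2)
    unfolding Zth_def by simp
  with assms(4) have "j - 1 < size {#x \<in># Z \<pi> t i. x \<le> (j * n + t - 1) div t#}"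
    by (intro less_size_filter_mset_if_nth_sorted_list_of_multiset_le) (auto simp: Z_def)
  then have "j - 1 < length (filter (\<lambda>x. x \<le> (j * n + t - 1) div t) (map (\<lambda>s. \<pi> s i) [1..<t+1]))"
    unfolding Z_def by (simp only: size_mset flip: mset_filter)
  moreover have "1 \<le> j"
    using assms(4) by simp
  ultimately show ?thesis
    by linarith
qed

lemma balanced_first_four_days:
  assumes "balanced N n \<pi>" and "i \<in> N" and "4 \<le> n"
  shows "1 \<le> length (filter (\<lambda>x. x \<le> (n + 1) div 2) [\<pi> 1 i, \<pi> 2 i])"
    and "1 \<le> length (filter (\<lambda>x. x \<le> (n + 2) div 3) [\<pi> 1 i, \<pi> 2 i, \<pi> 3 i])"
    and "1 \<le> length (filter (\<lambda>x. x \<le> (n + 3) div 4) [\<pi> 1 i, \<pi> 2 i, \<pi> 3 i, \<pi> 4 i])"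
    and "2 \<le> length (filter (\<lambda>x. x \<le> (n + 1) div 2) [\<pi> 1 i, \<pi> 2 i, \<pi> 3 i, \<pi> 4 i])"
proof -
  have small: "j \<le> length (filter (\<lambda>x. x \<le> b) (map (\<lambda>s. \<pi> s i) [1..<t+1]))"
    if "j \<in> {1..t}" "t \<le> 4" and "(j * n + t - 1) div t = b" for t j b
  proof -
    have "t \<in> {1..n}"
      using that assms(3) by auto
    from balanced_imp_small_items[OF assms(1) this assms(2) that(1)] show ?thesis
      by (simp only: that(3))
  qed
  have days: "[1..<2+1] = [1, 2]" "[1..<3+1] = [1, 2, 3]" "[1..<4+1] = [1, 2, 3, 4]"
    by (simp_all add: upt_rec)
  show "1 \<le> length (filter (\<lambda>x. x \<le> (n + 1) div 2) [\<pi> 1 i, \<pi> 2 i])"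
    using small[of 1 2 "(n + 1) div 2"] unfolding days by simp
  show "1 \<le> length (filter (\<lambda>x. x \<le> (n + 2) div 3) [\<pi> 1 i, \<pi> 2 i, \<pi> 3 i])"
    using small[of 1 3 "(n + 2) div 3"] unfolding days by simp
  show "1 \<le> length (filter (\<lambda>x. x \<le> (n + 3) div 4) [\<pi> 1 i, \<pi> 2 i, \<pi> 3 i, \<pi> 4 i])"
    using small[of 1 4 "(n + 3) div 4"] unfolding days by simp
  have "(2 * n + 4 - 1) div 4 = (n + 1) div 2"
    by presburger
  then show "2 \<le> length (filter (\<lambda>x. x \<le> (n + 1) div 2) [\<pi> 1 i, \<pi> 2 i, \<pi> 3 i, \<pi> 4 i])"
    using small[of 2 4 "(n + 1) div 2"] unfolding days by simp
qed

lemma first_four_days_weight_le: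
  fixes a1 a2 a3 a4 b1 b2 b3 :: nat
  assumes "b1 \<le> b2" and "b2 \<le> b3"
    and "1 \<le> length (filter (\<lambda>x. x \<le> b3) [a1, a2])"
    and "1 \<le> length (filter (\<lambda>x. x \<le> b2) [a1, a2, a3])"
    and "1 \<le> length (filter (\<lambda>x. x \<le> b1) [a1, a2, a3, a4])"
    and "2 \<le> length (filter (\<lambda>x. x \<le> b3) [a1, a2, a3, a4])"
  shows "of_bool (b2 < a1) + of_bool (b3 < a1) + of_bool (b2 < a2) + of_bool (b3 < a2)
    + of_bool (b1 < a3) + of_bool (b3 < a3) + of_bool (b3 < a4) \<le> (4::nat)"
  using assms by (auto split: if_splits)

lemma sum_of_bool_less_bij_betw:
  fixes f :: "'a \<Rightarrow> nat"
  assumes "bij_betw f A {1..n}"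
  shows "(\<Sum>x\<in>A. of_bool (b < f x)) = n - b"
proof -
  have "(\<Sum>x\<in>A. of_bool (b < f x)) = (\<Sum>v\<in>{1..n}. of_bool (b < v) :: nat)"
    using sum.reindex_bij_betw[OF assms] .
  also have "\<dots> = card ({1..n} \<inter> {v. b < v})"
    by simp
  also have "{1..n} \<inter> {v. b < v} = {b<..n}"
    by auto
  finally show ?thesis by simp
qed

lemma thresholds_sum_less:
  fixes n k r :: nat
  assumes "n = 6 * k + r" and "r < 6"
    and "(r = 0 \<and> k \<ge> 2) \<or> (r = 1 \<and> k \<ge> 11) \<or> (r = 2 \<and> k \<ge> 3) \<or>
         (r = 3 \<and> k \<ge> 8) \<or> (r = 4 \<and> k \<ge> 4) \<or> (r = 5 \<and> k \<ge> 9)"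
  shows "(n + 3) div 4 + 2 * ((n + 2) div 3) + 4 * ((n + 1) div 2) < 3 * n"
proof -
  have bounds: "(n + 3) div 4 * 4 \<le> n + 3" "(n + 2) div 3 * 3 \<le> n + 2" "(n + 1) div 2 * 2 \<le> n + 1"
    by simp_all
  have "50 \<le> n \<or> (even n \<and> 26 \<le> n) \<or> n = 12 \<or> n = 18 \<or> n = 20 \<or> n = 24"
    using assms by presburger
  then consider "50 \<le> n" | "even n" "26 \<le> n" | "n = 12 \<or> n = 18 \<or> n = 20 \<or> n = 24"
    by blast
  then show ?thesis
  proof cases
    case 1
    with bounds show ?thesis
      by linarith
  next
    case 2
    then have "(n + 1) div 2 * 2 = n"
      by auto
    with 2 bounds show ?thesis
      by linarith
  next
    case 3
    then show ?thesis
      by fastforce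
  qed
qed

theorem mainTheorem3:
  fixes N :: "'a set" and n k r :: nat and \<pi> :: "nat \<Rightarrow> 'a \<Rightarrow> nat"
  assumes "finite N" and "card N = n"
    and "n = 6 * k + r" and "r < 6"
    and "(r = 0 \<and> k \<ge> 2) \<or> (r = 1 \<and> k \<ge> 11) \<or> (r = 2 \<and> k \<ge> 3) \<or>
         (r = 3 \<and> k \<ge> 8) \<or> (r = 4 \<and> k \<ge> 4) \<or> (r = 5 \<and> k \<ge> 9)"
  shows "\<not> balanced N n \<pi>"
proof
  assume bal: "balanced N n \<pi>"
  define b1 b2 b3 where "b1 = (n + 3) div 4" and "b2 = (n + 2) div 3" and "b3 = (n + 1) div 2"
  have "b1 \<le> b2" "b2 \<le> b3" "b3 \<le> n" and "12 \<le> n"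
    using assms(3,5) by (auto simp: b1_def b2_def b3_def)
  define w where "w i = of_bool (b2 < \<pi> 1 i) + of_bool (b3 < \<pi> 1 i)
    + of_bool (b2 < \<pi> 2 i) + of_bool (b3 < \<pi> 2 i)
    + of_bool (b1 < \<pi> 3 i) + of_bool (b3 < \<pi> 3 i) + (of_bool (b3 < \<pi> 4 i) :: nat)" for i
  have "w i \<le> 4" if "i \<in> N" for i
    using first_four_days_weight_le[OF \<open>b1 \<le> b2\<close> \<open>b2 \<le> b3\<close>]
      balanced_first_four_days[OF bal that] \<open>12 \<le> n\<close>
    by (simp add: w_def b1_def b2_def b3_def)
  then have "sum w N \<le> 4 * n"
    using sum_bounded_above[of N w 4] assms(2) by simp
  moreover have "bij_betw (\<pi> t) N {1..n}" if "t \<in> {1..4}" for t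
    using bal \<open>12 \<le> n\<close> that unfolding balanced_def perm_seq_def by auto
  then have "(\<Sum>i\<in>N. of_bool (b < \<pi> t i)) = n - b" if "t \<in> {1..4}" for t b
    using that by (blast intro: sum_of_bool_less_bij_betw)
  then have "sum w N = (n - b1) + 2 * (n - b2) + 4 * (n - b3)"
    unfolding w_def sum.distrib by simp
  moreover have "b1 + 2 * b2 + 4 * b3 < 3 * n"
    unfolding b1_def b2_def b3_def by (rule thresholds_sum_less[OF assms(3-5)])
  ultimately show False
    using \<open>b1 \<le> b2\<close> \<open>b2 \<le> b3\<close> \<open>b3 \<le> n\<close> by linarith
qed

end
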